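(* Let $H$ be a Hintikka tree with induced belief $B$. For all sentences $\varphi, \varphi_1, \varphi_2$ of $L$ and every formula $\psi$ whose only free variable is $x$: (1) $B(\lnot \varphi) = 1 - B(\varphi)$; (2) $B(\varphi_1 \land \varphi_2) \leq \min(B(\varphi_1), B(\varphi_2))$; (3) $\max(B(\varphi_1), B(\varphi_2)) \leq B(\varphi_1 \lor \varphi_2)$; (4) $B((\forall x)\psi) \leq \min_{\delta \in \mathrm{dnf}((\exists x)\lnot\psi)} \{1 - B(\delta)\}$; (5) $\max_{\delta \in \mathrm{dnf}((\exists x)\psi)} \{B(\delta)\} \leq B((\exists x)\psi)$.
   Context: $L$ is a first-order language without equality with finitely many predicate symbols and no function or constant symbols. For $d \in \mathbb{N}$, $\Delta^{(d)}$ is the finite set of Hintikka constituents of depth $d$ with no free variables ($\Delta^{(0)} = \{\top\}$); every sentence $\varphi$ of quantifier depth $d$ is logically equivalent to the disjunction of a set $\mathrm{dnf}(\varphi) \subseteq \Delta^{(d)}$ (its Hintikka distributive normal form of depth $d$); each constituent is itself a sentence. $\mathrm{expand}(1,\delta^{(d)})\subseteq\Delta^{(d+1)}$ denotes the expansions of $\delta^{(d)}$. Refinement tree: on $\Delta = \bigcup_d \Delta^{(d)}$ put an edge from each $\delta^{(d)}$ to each member of $\mathrm{expand}(1,\delta^{(d)})$, keeping a constituent lying in several depth-$d$ expansions as child of only one of them. A Hintikka tree is a function $H: \Delta \to [0,1]$ with $H(\delta^{(0)}) = 1$ and $H(\delta) = \sum_{\delta' \text{ child of } \delta} H(\delta')$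 for all $\delta$. Let $\Psi^\omega$ be the set of infinite root paths in the refinement tree with the topology generated by cylinders $[\delta^{(0)}\cdots\delta^{(d)}]$, and $\beta$ the unique Borel probability measure with $\beta([\delta^{(0)}\cdots\delta^{(d)}]) = H(\delta^{(d)})$. The belief in a sentence $\varphi$ of depth $d$ is $B(\varphi) = \sum_{\delta^{(d)} \in \mathrm{dnf}(\varphi)} \beta([\delta^{(0)} \cdots \delta^{(d)}])$, where $\delta^{(0)}\cdots\delta^{(d)}$ is the root path to $\delta^{(d)}$. *)

theory Defs
  imports Complex_Main "HOL-Library.FSet"
begin

datatype 'p fm =
    Tru
  | Fls
  | Atom 'p "nat list"
  | Neg "'p fm"
  | Conj "'p fm" "'p fm"
  | Disj "'p fm" "'p fm"
  | Ex nat "'p fm"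
  | All nat "'p fm"

fun wf_fm :: "('p \<Rightarrow> nat) \<Rightarrow> 'p fm \<Rightarrow> bool" where
  "wf_fm ar Tru = True"
| "wf_fm ar Fls = True"
| "wf_fm ar (Atom p ts) = (length ts = ar p)"
| "wf_fm ar (Neg \<phi>) = wf_fm ar \<phi>"
| "wf_fm ar (Conj \<phi> \<psi>) = (wf_fm ar \<phi> \<and> wf_fm ar \<psi>)"
| "wf_fm ar (Disj \<phi> \<psi>) = (wf_fm ar \<phi> \<and> wf_fm ar \<psi>)"
| "wf_fm ar (Ex x \<phi>) = wf_fm ar \<phi>"
| "wf_fm ar (All x \<phi>) = wf_fm ar \<phi>"

fun fv :: "'p fm \<Rightarrow> nat set" where
  "fv Tru = {}"
| "fv Fls = {}"
| "fv (Atom p ts) = set ts"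
| "fv (Neg \<phi>) = fv \<phi>"
| "fv (Conj \<phi> \<psi>) = fv \<phi> \<union> fv \<psi>"
| "fv (Disj \<phi> \<psi>) = fv \<phi> \<union> fv \<psi>"
| "fv (Ex x \<phi>) = fv \<phi> - {x}"
| "fv (All x \<phi>) = fv \<phi> - {x}"

fun qd :: "'p fm \<Rightarrow> nat" where
  "qd Tru = 0"
| "qd Fls = 0"
| "qd (Atom p ts) = 0"
| "qd (Neg \<phi>) = qd \<phi>"
| "qd (Conj \<phi> \<psi>) = max (qd \<phi>) (qd \<psi>)"
| "qd (Disj \<phi> \<psi>) = max (qd \<phi>) (qd \<psi>)"
| "qd (Ex x \<phi>) = Suc (qd \<phi>)"
| "qd (All x \<phi>) = Suc (qd \<phi>)"

definition is_sentence :: "('p \<Rightarrow> nat) \<Rightarrow> 'p fm \<Rightarrow> bool" where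
  "is_sentence ar \<phi> \<longleftrightarrow> wf_fm ar \<phi> \<and> fv \<phi> = {}"

text \<open>A (attributive) constituent at level k (free variables 0,...,k-1, the newest
  one being k-1) of depth d is represented by Cst A S, where A is the set of
  the positive atoms among the atoms that are new at level k (all other new
  atoms occur negated), and S is the set of constituents of depth d-1 at level
  k+1 that are asserted to exist (and to exhaust all possibilities) for the
  new variable k.\<close>

datatype 'p cst = Cst (catoms: "('p \<times> nat list) fset") (csub: "'p cst fset")

definition newatoms :: "('p \<Rightarrow> nat) \<Rightarrow> nat \<Rightarrow> ('p \<times> nat list) set" where
  "newatoms ar k = {(p, ts). length ts = ar p \<and> set ts \<subseteq> {..<k} \<and> (k = 0 \<or> k - 1 \<in> set ts)}"

fun is_cst :: "('p \<Rightarrow> nat) \<Rightarrow> nat \<Rightarrow> nat \<Rightarrow> 'p cst \<Rightarrow> bool" where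
  "is_cst ar 0 k c \<longleftrightarrow> fset (catoms c) \<subseteq> newatoms ar k \<and> csub c = {||}"
| "is_cst ar (Suc e) k c \<longleftrightarrow> fset (catoms c) \<subseteq> newatoms ar k \<and>
      (\<forall>C \<in> fset (csub c). is_cst ar e (Suc k) C)"

definition Delta :: "('p \<Rightarrow> nat) \<Rightarrow> nat \<Rightarrow> 'p cst set" where
  "Delta ar d = {c. is_cst ar d 0 c}"

definition list_of :: "'a set \<Rightarrow> 'a list" where
  "list_of X = (SOME xs. distinct xs \<and> set xs = X)"

fun bigconj :: "'p fm list \<Rightarrow> 'p fm" where
  "bigconj [] = Tru"
| "bigconj [\<phi>] = \<phi>"
| "bigconj (\<phi> # \<phi>s) = Conj \<phi> (bigconj \<phi>s)"

fun bigdisj :: "'p fm list \<Rightarrow> 'p fm" where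
  "bigdisj [] = Fls"
| "bigdisj [\<phi>] = \<phi>"
| "bigdisj (\<phi> # \<phi>s) = Disj \<phi> (bigdisj \<phi>s)"

definition atom_part :: "('p \<Rightarrow> nat) \<Rightarrow> nat \<Rightarrow> ('p \<times> nat list) fset \<Rightarrow> 'p fm" where
  "atom_part ar k A = bigconj (map (\<lambda>a. if a \<in> fset A then Atom (fst a) (snd a)
                                          else Neg (Atom (fst a) (snd a)))
                                   (list_of (newatoms ar k)))"

fun cst_fm :: "('p \<Rightarrow> nat) \<Rightarrow> nat \<Rightarrow> nat \<Rightarrow> 'p cst \<Rightarrow> 'p fm" where
  "cst_fm ar 0 k c = atom_part ar k (catoms c)"
| "cst_fm ar (Suc e) k c =
     Conj (atom_part ar k (catoms c))
      (Conj (bigconj (map (\<lambda>C. Ex k (cst_fm ar e (Suc k) C)) (list_of (fset (csub c)))))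
            (All k (bigdisj (map (\<lambda>C. cst_fm ar e (Suc k) C) (list_of (fset (csub c)))))))"

fun reduct :: "nat \<Rightarrow> 'p cst \<Rightarrow> 'p cst" where
  "reduct 0 c = Cst (catoms c) {||}"
| "reduct (Suc e) c = Cst (catoms c) (fimage (reduct e) (csub c))"

text \<open>expand(1, \<delta>) for \<delta> in \<Delta>^(d): the depth-(d+1) constituents subordinate to \<delta>.
  These are the children of \<delta> in the refinement tree.\<close>
definition expand1 :: "('p \<Rightarrow> nat) \<Rightarrow> nat \<Rightarrow> 'p cst \<Rightarrow> 'p cst set" where
  "expand1 ar d \<delta> = {\<delta>' \<in> Delta ar (Suc d). reduct d \<delta>' = \<delta>}"

text \<open>Syntactic evaluation of a formula against a constituent of depth d at level k;
  P collects the positive atoms fixed along the path, env maps variable names to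
  positions.  dnf(\<phi>) is the set of depth-qd(\<phi>) constituents in which \<phi> holds.\<close>
fun eval :: "nat \<Rightarrow> nat \<Rightarrow> 'p cst \<Rightarrow> ('p \<times> nat list) set \<Rightarrow> (nat \<Rightarrow> nat) \<Rightarrow> 'p fm \<Rightarrow> bool" where
  "eval d k c P env Tru = True"
| "eval d k c P env Fls = False"
| "eval d k c P env (Atom p ts) = ((p, map env ts) \<in> P)"
| "eval d k c P env (Neg \<phi>) = (\<not> eval d k c P env \<phi>)"
| "eval d k c P env (Conj \<phi> \<psi>) = (eval d k c P env \<phi> \<and> eval d k c P env \<psi>)"
| "eval d k c P env (Disj \<phi> \<psi>) = (eval d k c P env \<phi> \<or> eval d k c P env \<psi>)"
| "eval d k c P env (Ex x \<phi>) = (case d of 0 \<Rightarrow> False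
     | Suc e \<Rightarrow> (\<exists>C \<in> fset (csub c). eval e (Suc k) C (P \<union> fset (catoms C)) (env(x := k)) \<phi>))"
| "eval d k c P env (All x \<phi>) = (case d of 0 \<Rightarrow> False
     | Suc e \<Rightarrow> (\<forall>C \<in> fset (csub c). eval e (Suc k) C (P \<union> fset (catoms C)) (env(x := k)) \<phi>))"

definition dnf :: "('p \<Rightarrow> nat) \<Rightarrow> 'p fm \<Rightarrow> 'p cst set" where
  "dnf ar \<phi> = {\<delta> \<in> Delta ar (qd \<phi>). eval (qd \<phi>) 0 \<delta> (fset (catoms \<delta>)) (\<lambda>_. 0) \<phi>}"

text \<open>H d \<delta> is the value of the Hintikka tree at the node \<delta> \<in> \<Delta>^(d).\<close>
definition hintikka_tree :: "('p \<Rightarrow> nat) \<Rightarrow> (nat \<Rightarrow> 'p cst \<Rightarrow> real) \<Rightarrow> bool" where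
  "hintikka_tree ar H \<longleftrightarrow>
     (\<forall>\<delta> \<in> Delta ar 0. H 0 \<delta> = 1) \<and>
     (\<forall>d. \<forall>\<delta> \<in> Delta ar d. 0 \<le> H d \<delta> \<and> H d \<delta> \<le> 1) \<and>
     (\<forall>d. \<forall>\<delta> \<in> Delta ar d. H d \<delta> = (\<Sum>\<delta>' \<in> expand1 ar d \<delta>. H (Suc d) \<delta>'))"

text \<open>Belief: B(\<phi>) = sum over dnf(\<phi>) of \<beta>([root path to \<delta>]) = sum of H(\<delta>).\<close>
definition belief :: "('p \<Rightarrow> nat) \<Rightarrow> (nat \<Rightarrow> 'p cst \<Rightarrow> real) \<Rightarrow> 'p fm \<Rightarrow> real" where
  "belief ar H \<phi> = (\<Sum>\<delta> \<in> dnf ar \<phi>. H (qd \<phi>) \<delta>)"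

end

theory Submission
  imports Defs
begin

text \<open>Since a Hintikka tree is additive along the refinement tree, the mass that a depth-d
  normal form gives to a formula does not change when the formula is expanded to any greater
  depth. So the beliefs in several formulas can be compared inside one common depth, where
  connectives act pointwise on constituents: negation complements the set of constituents
  (whose total mass is 1), conjunction shrinks it and disjunction enlarges it. For the
  quantifier bounds one shows in addition that the formula of a constituent \<delta> holds in
  \<delta> and in no other constituent of its depth, so that its belief is the single
  weight H(\<delta>), one of the summands of the belief in any formula whose normal form
  contains \<delta>.\<close>

lemma finite_newatoms: "finite (newatoms (ar :: 'p::finite \<Rightarrow> nat) k)"
proof -
  have "newatoms ar k \<subseteq> (\<Union>p. {p} \<times> {ts. set ts \<subseteq> {..<k} \<and> length ts = ar p})"
    unfolding newatoms_def by auto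
  moreover have "finite (\<Union>p::'p. {p} \<times> {ts. set ts \<subseteq> {..<k} \<and> length ts = ar p})"
    by (intro finite_UN_I) (auto intro: finite_lists_length_eq)
  ultimately show ?thesis by (rule finite_subset)
qed

lemma newatoms_disjoint: "i \<noteq> j \<Longrightarrow> newatoms ar i \<inter> newatoms ar j = {}"
  unfolding newatoms_def by (force simp: linorder_neq_iff)

lemma newatoms_0_empty: "\<forall>p. 0 < ar p \<Longrightarrow> newatoms ar 0 = {}"
  unfolding newatoms_def by auto (metis less_irrefl)

lemma finite_fset_subsets: "finite N \<Longrightarrow> finite {A. fset A \<subseteq> N}"
proof -
  assume "finite N"
  then have "finite (fset -` Pow N)"
    by (intro finite_vimageI) (auto simp: inj_def fset_inject)
  then show ?thesis by (simp add: vimage_def)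
qed

lemma finite_is_cst: "finite {c. is_cst (ar :: 'p::finite \<Rightarrow> nat) e k c}"
proof (induction e arbitrary: k)
  case 0
  have "{c. is_cst ar 0 k c} \<subseteq> (\<lambda>A. Cst A {||}) ` {A. fset A \<subseteq> newatoms ar k}"
    by (auto intro!: image_eqI[where x = "catoms _"] cst.expand)
  then show ?case
    by (rule finite_surj[OF finite_fset_subsets[OF finite_newatoms]])
next
  case (Suc e)
  have "{c. is_cst ar (Suc e) k c} \<subseteq> (\<lambda>(A, S). Cst A S) `
      ({A. fset A \<subseteq> newatoms ar k} \<times> {S. fset S \<subseteq> {c. is_cst ar e (Suc k) c}})"
    by (auto intro!: image_eqI[where x = "(catoms _, csub _)"])
  moreover have "finite ({A. fset A \<subseteq> newatoms ar k} \<times> {S. fset S \<subseteq> {c. is_cst ar e (Suc k) c}})"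
    using finite_fset_subsets[OF finite_newatoms] finite_fset_subsets[OF Suc.IH] by blast
  ultimately show ?case
    by (rule finite_surj[rotated])
qed

lemma finite_Delta: "finite (Delta (ar :: 'p::finite \<Rightarrow> nat) d)"
  unfolding Delta_def by (rule finite_is_cst)

lemma Delta_0: "\<forall>p. 0 < ar p \<Longrightarrow> Delta ar 0 = {Cst {||} {||}}"
  unfolding Delta_def by (auto simp: newatoms_0_empty intro: cst.expand)

lemma is_cst_catoms: "is_cst ar e k c \<Longrightarrow> fset (catoms c) \<subseteq> newatoms ar k"
  by (cases e) auto

lemma is_cst_reduct: "is_cst ar (Suc e) k c \<Longrightarrow> is_cst ar e k (reduct e c)"
  by (induction e arbitrary: k c) auto

lemma reduct_Delta: "\<delta> \<in> Delta ar (Suc d) \<Longrightarrow> reduct d \<delta> \<in> Delta ar d"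
  unfolding Delta_def by (simp add: is_cst_reduct)

lemma catoms_reduct [simp]: "catoms (reduct e c) = catoms c"
  by (cases e) auto

lemma eval_reduct:
  "qd \<phi> \<le> e \<Longrightarrow> eval (Suc e) k c P env \<phi> = eval e k (reduct e c) P env \<phi>"
proof (induction \<phi> arbitrary: e k c P env)
  case (Ex x \<phi>)
  then obtain e' where "e = Suc e'" by (cases e) auto
  with Ex show ?case by (simp del: fun_upd_apply)
next
  case (All x \<phi>)
  then obtain e' where "e = Suc e'" by (cases e) auto
  with All show ?case by (simp del: fun_upd_apply)
qed auto

definition holds :: "nat \<Rightarrow> 'p cst \<Rightarrow> 'p fm \<Rightarrow> bool" where
  "holds d \<delta> \<phi> \<longleftrightarrow> eval d 0 \<delta> (fset (catoms \<delta>)) (\<lambda>_. 0) \<phi>"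

definition belief_at :: "('p \<Rightarrow> nat) \<Rightarrow> (nat \<Rightarrow> 'p cst \<Rightarrow> real) \<Rightarrow> nat \<Rightarrow> 'p fm \<Rightarrow> real" where
  "belief_at ar H d \<phi> = (\<Sum>\<delta> \<in> {\<delta> \<in> Delta ar d. holds d \<delta> \<phi>}. H d \<delta>)"

lemma dnf_holds: "dnf ar \<phi> = {\<delta> \<in> Delta ar (qd \<phi>). holds (qd \<phi>) \<delta> \<phi>}"
  unfolding dnf_def holds_def ..

lemma belief_eq_belief_at_qd: "belief ar H \<phi> = belief_at ar H (qd \<phi>) \<phi>"
  unfolding belief_def belief_at_def dnf_holds ..

lemma holds_reduct: "qd \<phi> \<le> d \<Longrightarrow> holds (Suc d) \<delta> \<phi> = holds d (reduct d \<delta>) \<phi>"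
  unfolding holds_def by (simp add: eval_reduct)

lemma finite_dnf: "finite (dnf (ar :: 'p::finite \<Rightarrow> nat) \<phi>)"
  unfolding dnf_def using finite_Delta[of ar] by simp

lemma hintikka_tree_root: "hintikka_tree ar H \<Longrightarrow> \<delta> \<in> Delta ar 0 \<Longrightarrow> H 0 \<delta> = 1"
  unfolding hintikka_tree_def by blast

lemma hintikka_tree_nonneg: "hintikka_tree ar H \<Longrightarrow> \<delta> \<in> Delta ar d \<Longrightarrow> 0 \<le> H d \<delta>"
  unfolding hintikka_tree_def by blast

lemma hintikka_tree_expand1:
  "hintikka_tree ar H \<Longrightarrow> \<delta> \<in> Delta ar d \<Longrightarrow> H d \<delta> = (\<Sum>\<delta>' \<in> expand1 ar d \<delta>. H (Suc d) \<delta>')"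
  unfolding hintikka_tree_def by blast

lemma hintikka_tree_sum_Suc:
  fixes ar :: "'p::finite \<Rightarrow> nat"
  assumes H: "hintikka_tree ar H" and S: "S \<subseteq> Delta ar d"
  shows "sum (H d) S = sum (H (Suc d)) {\<delta>' \<in> Delta ar (Suc d). reduct d \<delta>' \<in> S}"
    (is "_ = sum _ ?T")
proof -
  have "sum (H d) S = (\<Sum>\<delta>\<in>S. \<Sum>\<delta>' \<in> expand1 ar d \<delta>. H (Suc d) \<delta>')"
    using S by (intro sum.cong) (auto simp: hintikka_tree_expand1[OF H])
  also have "\<dots> = (\<Sum>\<delta>\<in>S. \<Sum>\<delta>' \<in> {\<delta>' \<in> ?T. reduct d \<delta>' = \<delta>}. H (Suc d) \<delta>')"
    unfolding expand1_def by (intro sum.cong) auto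
  also have "\<dots> = sum (H (Suc d)) ?T"
    by (rule sum.group) (auto simp: finite_Delta finite_subset[OF S finite_Delta])
  finally show ?thesis .
qed

lemma belief_at_Suc:
  fixes ar :: "'p::finite \<Rightarrow> nat"
  assumes "hintikka_tree ar H" and "qd \<phi> \<le> d"
  shows "belief_at ar H (Suc d) \<phi> = belief_at ar H d \<phi>"
proof -
  have "belief_at ar H d \<phi>
      = sum (H (Suc d)) {\<delta>' \<in> Delta ar (Suc d). reduct d \<delta>' \<in> {\<delta> \<in> Delta ar d. holds d \<delta> \<phi>}}"
    unfolding belief_at_def by (rule hintikka_tree_sum_Suc[OF assms(1)]) blast
  also have "{\<delta>' \<in> Delta ar (Suc d). reduct d \<delta>' \<in> {\<delta> \<in> Delta ar d. holds d \<delta> \<phi>}}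
      = {\<delta>' \<in> Delta ar (Suc d). holds (Suc d) \<delta>' \<phi>}"
    using holds_reduct[OF assms(2)] reduct_Delta by blast
  finally show ?thesis
    unfolding belief_at_def ..
qed

lemma belief_eq_belief_at:
  fixes ar :: "'p::finite \<Rightarrow> nat"
  assumes "hintikka_tree ar H" and "qd \<phi> \<le> d"
  shows "belief ar H \<phi> = belief_at ar H d \<phi>"
  using assms(2)
proof (induction d rule: dec_induct)
  case base
  show ?case by (rule belief_eq_belief_at_qd)
next
  case (step d)
  then show ?case using belief_at_Suc[OF assms(1)] by simp
qed

text \<open>Positive arities make \<Delta>^(0) a single constituent; a 0-ary predicate would split the
  root into several constituents of weight 1 each.\<close>

lemma hintikka_tree_sum_Delta:
  fixes ar :: "'p::finite \<Rightarrow> nat"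
  assumes "\<forall>p. 0 < ar p" and H: "hintikka_tree ar H"
  shows "sum (H d) (Delta ar d) = 1"
proof -
  have "sum (H d) (Delta ar d) = belief_at ar H d Tru"
    by (simp add: belief_at_def holds_def)
  also have "\<dots> = belief_at ar H 0 Tru"
    using belief_eq_belief_at[OF H, of Tru] by simp
  also have "\<dots> = 1"
    by (simp add: belief_at_def holds_def Delta_0[OF assms(1)] hintikka_tree_root[OF H])
  finally show ?thesis .
qed

lemma belief_at_mono:
  fixes ar :: "'p::finite \<Rightarrow> nat"
  assumes "hintikka_tree ar H" and "\<And>\<delta>. \<delta> \<in> Delta ar d \<Longrightarrow> holds d \<delta> \<phi> \<Longrightarrow> holds d \<delta> \<phi>'"
  shows "belief_at ar H d \<phi> \<le> belief_at ar H d \<phi>'"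
  unfolding belief_at_def
  using assms by (intro sum_mono2) (auto simp: finite_Delta hintikka_tree_nonneg)

lemma belief_at_compl:
  fixes ar :: "'p::finite \<Rightarrow> nat"
  assumes "\<forall>p. 0 < ar p" and "hintikka_tree ar H"
    and "\<And>\<delta>. \<delta> \<in> Delta ar d \<Longrightarrow> holds d \<delta> \<phi> \<longleftrightarrow> \<not> holds d \<delta> \<phi>'"
  shows "belief_at ar H d \<phi> = 1 - belief_at ar H d \<phi>'"
proof -
  have "{\<delta> \<in> Delta ar d. holds d \<delta> \<phi>} = Delta ar d - {\<delta> \<in> Delta ar d. holds d \<delta> \<phi>'}"
    using assms(3) by auto
  then show ?thesis
    unfolding belief_at_def
    by (simp add: sum_diff finite_Delta hintikka_tree_sum_Delta[OF assms(1,2)])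
qed

lemma belief_Neg:
  fixes ar :: "'p::finite \<Rightarrow> nat"
  assumes "\<forall>p. 0 < ar p" and "hintikka_tree ar H"
  shows "belief ar H (Neg \<phi>) = 1 - belief ar H \<phi>"
  unfolding belief_eq_belief_at_qd
  using belief_at_compl[OF assms] by (simp add: holds_def)

lemma belief_Conj_le:
  fixes ar :: "'p::finite \<Rightarrow> nat"
  assumes H: "hintikka_tree ar H"
  shows "belief ar H (Conj \<phi>1 \<phi>2) \<le> min (belief ar H \<phi>1) (belief ar H \<phi>2)"
proof -
  let ?d = "qd (Conj \<phi>1 \<phi>2)"
  have "belief_at ar H ?d (Conj \<phi>1 \<phi>2) \<le> belief_at ar H ?d \<phi>1"
    by (rule belief_at_mono[OF H]) (simp add: holds_def)
  moreover have "belief_at ar H ?d (Conj \<phi>1 \<phi>2) \<le> belief_at ar H ?d \<phi>2"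
    by (rule belief_at_mono[OF H]) (simp add: holds_def)
  ultimately show ?thesis
    using belief_eq_belief_at[OF H, of \<phi>1 ?d] belief_eq_belief_at[OF H, of \<phi>2 ?d]
      belief_eq_belief_at_qd[of ar H "Conj \<phi>1 \<phi>2"] by simp
qed

lemma belief_Disj_ge:
  fixes ar :: "'p::finite \<Rightarrow> nat"
  assumes H: "hintikka_tree ar H"
  shows "max (belief ar H \<phi>1) (belief ar H \<phi>2) \<le> belief ar H (Disj \<phi>1 \<phi>2)"
proof -
  let ?d = "qd (Disj \<phi>1 \<phi>2)"
  have "belief_at ar H ?d \<phi>1 \<le> belief_at ar H ?d (Disj \<phi>1 \<phi>2)"
    by (rule belief_at_mono[OF H]) (simp add: holds_def)
  moreover have "belief_at ar H ?d \<phi>2 \<le> belief_at ar H ?d (Disj \<phi>1 \<phi>2)"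
    by (rule belief_at_mono[OF H]) (simp add: holds_def)
  ultimately show ?thesis
    using belief_eq_belief_at[OF H, of \<phi>1 ?d] belief_eq_belief_at[OF H, of \<phi>2 ?d]
      belief_eq_belief_at_qd[of ar H "Disj \<phi>1 \<phi>2"] by simp
qed

lemma belief_All:
  fixes ar :: "'p::finite \<Rightarrow> nat"
  assumes "\<forall>p. 0 < ar p" and "hintikka_tree ar H"
  shows "belief ar H (All x \<psi>) = 1 - belief ar H (Ex x (Neg \<psi>))"
  unfolding belief_eq_belief_at_qd
  using belief_at_compl[OF assms] by (simp add: holds_def)

lemma set_list_of: "finite X \<Longrightarrow> set (list_of X) = X"
  unfolding list_of_def by (metis (mono_tags, lifting) finite_distinct_list someI_ex)

lemma eval_bigconj: "eval d k c P env (bigconj \<phi>s) \<longleftrightarrow> (\<forall>\<phi>\<in>set \<phi>s. eval d k c P env \<phi>)"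
  by (induction \<phi>s rule: bigconj.induct) auto

lemma eval_bigdisj: "eval d k c P env (bigdisj \<phi>s) \<longleftrightarrow> (\<exists>\<phi>\<in>set \<phi>s. eval d k c P env \<phi>)"
  by (induction \<phi>s rule: bigdisj.induct) auto

lemma qd_bigconj_le: "\<forall>\<phi>\<in>set \<phi>s. qd \<phi> \<le> n \<Longrightarrow> qd (bigconj \<phi>s) \<le> n"
  by (induction \<phi>s rule: bigconj.induct) auto

lemma qd_bigdisj_le: "\<forall>\<phi>\<in>set \<phi>s. qd \<phi> \<le> n \<Longrightarrow> qd (bigdisj \<phi>s) \<le> n"
  by (induction \<phi>s rule: bigdisj.induct) auto

lemma qd_atom_part [simp]: "qd (atom_part ar k A) = 0"
  unfolding atom_part_def by (rule le_0_eq[THEN iffD1], rule qd_bigconj_le) auto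

lemma qd_cst_fm_le: "qd (cst_fm ar e k c) \<le> e"
proof (induction e arbitrary: k c)
  case (Suc e)
  have "qd (bigconj (map (\<lambda>C. Ex k (cst_fm ar e (Suc k) C)) (list_of (fset (csub c))))) \<le> Suc e"
    by (rule qd_bigconj_le) (auto simp: Suc.IH)
  moreover have "qd (bigdisj (map (cst_fm ar e (Suc k)) (list_of (fset (csub c))))) \<le> e"
    by (rule qd_bigdisj_le) (auto simp: Suc.IH)
  ultimately show ?case
    by simp
qed simp

lemma eval_atom_part:
  fixes ar :: "'p::finite \<Rightarrow> nat"
  assumes "\<forall>j<k. env j = j"
  shows "eval d k c P env (atom_part ar k A) \<longleftrightarrow> (\<forall>a \<in> newatoms ar k. a \<in> fset A \<longleftrightarrow> a \<in> P)"
proof -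
  have env_id: "map env ts = ts" if "(p, ts) \<in> newatoms ar k" for p ts
    using that assms unfolding newatoms_def by (auto intro: map_idI)
  have "eval d k c P env (atom_part ar k A) \<longleftrightarrow> (\<forall>a \<in> newatoms ar k.
      eval d k c P env (if a |\<in>| A then Atom (fst a) (snd a) else Neg (Atom (fst a) (snd a))))"
    unfolding atom_part_def eval_bigconj set_map set_list_of[OF finite_newatoms] by blast
  also have "\<dots> \<longleftrightarrow> (\<forall>a \<in> newatoms ar k. a \<in> fset A \<longleftrightarrow> a \<in> P)"
    by (intro ball_cong) (auto simp: env_id)
  finally show ?thesis .
qed

lemma eval_atom_part_iff:
  fixes ar :: "'p::finite \<Rightarrow> nat"
  assumes "\<forall>j<k. env j = j" and "fset A \<subseteq> newatoms ar k" and "P \<inter> newatoms ar k = fset B"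
  shows "eval d k c P env (atom_part ar k A) \<longleftrightarrow> A = B"
proof -
  have "(\<forall>a \<in> newatoms ar k. a \<in> fset A \<longleftrightarrow> a \<in> P) \<longleftrightarrow> fset A = fset B"
    using assms(2,3) by blast
  then show ?thesis
    by (simp add: eval_atom_part[OF assms(1)] fset_inject)
qed

text \<open>P is the set of atoms asserted so far along the path to c'; it has to agree with c' on
  the atoms that are new at level k and may not yet contain atoms of deeper levels.\<close>

lemma eval_cst_fm_iff:
  fixes ar :: "'p::finite \<Rightarrow> nat"
  assumes "is_cst ar e k c" and "is_cst ar e k c'" and "\<forall>j<k. env j = j"
    and "P \<inter> newatoms ar k = fset (catoms c')" and "\<forall>j>k. P \<inter> newatoms ar j = {}"
  shows "eval e k c' P env (cst_fm ar e k c) \<longleftrightarrow> c' = c"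
  using assms
proof (induction e arbitrary: k c c' P env)
  case 0
  then have "eval 0 k c' P env (cst_fm ar 0 k c) \<longleftrightarrow> catoms c = catoms c'"
    using eval_atom_part_iff[OF 0(3) is_cst_catoms[OF 0(1)] 0(4)] by simp
  then show ?case
    using 0 by (auto intro: cst.expand)
next
  case (Suc e)
  let ?ev = "\<lambda>C' C. eval e (Suc k) C' (P \<union> fset (catoms C')) (env(k := k)) (cst_fm ar e (Suc k) C)"
  have atoms: "eval (Suc e) k c' P env (atom_part ar k (catoms c)) \<longleftrightarrow> catoms c = catoms c'"
    using eval_atom_part_iff[OF Suc.prems(3) is_cst_catoms[OF Suc.prems(1)] Suc.prems(4)] .
  have children: "?ev C' C \<longleftrightarrow> C' = C" if "C |\<in>| csub c" and "C' |\<in>| csub c'" for C C'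
  proof (rule Suc.IH)
    show "is_cst ar e (Suc k) C" "is_cst ar e (Suc k) C'"
      using that Suc.prems(1,2) by auto
    then have atoms_C': "fset (catoms C') \<subseteq> newatoms ar (Suc k)"
      by (intro is_cst_catoms)
    then show "(P \<union> fset (catoms C')) \<inter> newatoms ar (Suc k) = fset (catoms C')"
      using Suc.prems(5) by auto
    show "\<forall>j>Suc k. (P \<union> fset (catoms C')) \<inter> newatoms ar j = {}"
    proof (intro allI impI)
      fix j
      assume "Suc k < j"
      then have "P \<inter> newatoms ar j = {}" and "newatoms ar (Suc k) \<inter> newatoms ar j = {}"
        using Suc.prems(5) newatoms_disjoint[of "Suc k" j ar] by auto
      then show "(P \<union> fset (catoms C')) \<inter> newatoms ar j = {}"
        using atoms_C' by blast
    qed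
    show "\<forall>j<Suc k. (env(k := k)) j = j"
      using Suc.prems(3) by simp
  qed
  have "eval (Suc e) k c' P env (cst_fm ar (Suc e) k c) \<longleftrightarrow>
      catoms c = catoms c' \<and> (\<forall>C \<in> fset (csub c). \<exists>C' \<in> fset (csub c'). ?ev C' C)
        \<and> (\<forall>C' \<in> fset (csub c'). \<exists>C \<in> fset (csub c). ?ev C' C)"
    by (simp add: atoms eval_bigconj eval_bigdisj set_list_of)
  also have "\<dots> \<longleftrightarrow> catoms c = catoms c' \<and> csub c = csub c'"
    using children by (auto simp: fset_eq_iff)
  also have "\<dots> \<longleftrightarrow> c' = c"
    using cst.expand by auto
  finally show ?case .
qed

lemma holds_cst_fm_iff:
  fixes ar :: "'p::finite \<Rightarrow> nat"
  assumes "\<delta> \<in> Delta ar d" and "\<delta>' \<in> Delta ar d"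
  shows "holds d \<delta>' (cst_fm ar d 0 \<delta>) \<longleftrightarrow> \<delta>' = \<delta>"
  unfolding holds_def
proof (rule eval_cst_fm_iff)
  show "is_cst ar d 0 \<delta>" "is_cst ar d 0 \<delta>'"
    using assms by (auto simp: Delta_def)
  then have "fset (catoms \<delta>') \<subseteq> newatoms ar 0"
    by (intro is_cst_catoms)
  then show "fset (catoms \<delta>') \<inter> newatoms ar 0 = fset (catoms \<delta>')"
    and "\<forall>j>0. fset (catoms \<delta>') \<inter> newatoms ar j = {}"
    using newatoms_disjoint[of 0 _ ar] by auto
qed simp

lemma belief_cst_fm:
  fixes ar :: "'p::finite \<Rightarrow> nat"
  assumes H: "hintikka_tree ar H" and "\<delta> \<in> Delta ar d"
  shows "belief ar H (cst_fm ar d 0 \<delta>) = H d \<delta>"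
proof -
  have "{\<delta>' \<in> Delta ar d. holds d \<delta>' (cst_fm ar d 0 \<delta>)} = {\<delta>}"
    using assms(2) holds_cst_fm_iff[OF assms(2)] by auto
  then show ?thesis
    using belief_eq_belief_at[OF H qd_cst_fm_le] by (simp add: belief_at_def)
qed

lemma belief_cst_fm_le:
  fixes ar :: "'p::finite \<Rightarrow> nat"
  assumes H: "hintikka_tree ar H" and \<delta>: "\<delta> \<in> dnf ar \<phi>"
  shows "belief ar H (cst_fm ar (qd \<phi>) 0 \<delta>) \<le> belief ar H \<phi>"
proof -
  have "belief ar H (cst_fm ar (qd \<phi>) 0 \<delta>) = H (qd \<phi>) \<delta>"
    using \<delta> belief_cst_fm[OF H] by (simp add: dnf_def)
  also have "\<dots> \<le> belief ar H \<phi>"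
    unfolding belief_def using \<delta>
    by (intro member_le_sum finite_dnf) (auto simp: dnf_def hintikka_tree_nonneg[OF H])
  finally show ?thesis .
qed

theorem mainTheorem6:
  fixes ar :: "'p::finite \<Rightarrow> nat" and H :: "nat \<Rightarrow> 'p cst \<Rightarrow> real"
  assumes arity_pos: "\<forall>p. 0 < ar p"
    and H: "hintikka_tree ar H"
  shows
   "(\<forall>\<phi>. is_sentence ar \<phi> \<longrightarrow> belief ar H (Neg \<phi>) = 1 - belief ar H \<phi>) \<and>
    (\<forall>\<phi>1 \<phi>2. is_sentence ar \<phi>1 \<and> is_sentence ar \<phi>2 \<longrightarrow>
        belief ar H (Conj \<phi>1 \<phi>2) \<le> min (belief ar H \<phi>1) (belief ar H \<phi>2)) \<and>
    (\<forall>\<phi>1 \<phi>2. is_sentence ar \<phi>1 \<and> is_sentence ar \<phi>2 \<longrightarrow>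
        max (belief ar H \<phi>1) (belief ar H \<phi>2) \<le> belief ar H (Disj \<phi>1 \<phi>2)) \<and>
    (\<forall>\<psi> x. wf_fm ar \<psi> \<and> fv \<psi> = {x} \<and> dnf ar (Ex x (Neg \<psi>)) \<noteq> {} \<longrightarrow>
        belief ar H (All x \<psi>) \<le>
          Min ((\<lambda>\<delta>. 1 - belief ar H (cst_fm ar (qd (Ex x (Neg \<psi>))) 0 \<delta>))
                 ` dnf ar (Ex x (Neg \<psi>)))) \<and>
    (\<forall>\<psi> x. wf_fm ar \<psi> \<and> fv \<psi> = {x} \<and> dnf ar (Ex x \<psi>) \<noteq> {} \<longrightarrow>
        Max ((\<lambda>\<delta>. belief ar H (cst_fm ar (qd (Ex x \<psi>)) 0 \<delta>)) ` dnf ar (Ex x \<psi>))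
          \<le> belief ar H (Ex x \<psi>))"
proof -
  have "belief ar H (All x \<psi>) \<le>
      Min ((\<lambda>\<delta>. 1 - belief ar H (cst_fm ar (qd (Ex x (Neg \<psi>))) 0 \<delta>)) ` dnf ar (Ex x (Neg \<psi>)))"
    if "dnf ar (Ex x (Neg \<psi>)) \<noteq> {}" for x \<psi>
    using that belief_All[OF arity_pos H] belief_cst_fm_le[OF H]
    by (intro Min.boundedI) (auto simp: finite_dnf simp del: qd.simps)
  moreover have "Max ((\<lambda>\<delta>. belief ar H (cst_fm ar (qd (Ex x \<psi>)) 0 \<delta>)) ` dnf ar (Ex x \<psi>))
      \<le> belief ar H (Ex x \<psi>)"
    if "dnf ar (Ex x \<psi>) \<noteq> {}" for x \<psi>
    using that belief_cst_fm_le[OF H] by (intro Max.boundedI) (auto simp: finite_dnf simp del: qd.simps)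
  ultimately show ?thesis
    using belief_Neg[OF arity_pos H] belief_Conj_le[OF H] belief_Disj_ge[OF H] by blast
qed

end
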